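(* In the setting of the context, under condition (A1) the family $\{a_{v,\sigma}\}_{v\in\mathcal{V}_L^W}$ is connected: for any $v,v'\in\mathcal{V}_L^W$ there is a sequence $v=v_0,v_1,\dots,v_k=v'$ of white vertices such that for each $j$, $a_{v_{j-1},\sigma}$ and $a_{v_j,\sigma}$ are directly connected, meaning there is a vertex $u$ with $\{c^\dagger_{u,\sigma},a_{v_{j-1},\sigma}\}\ne0$ and $\{c^\dagger_{u,\sigma},a_{v_j,\sigma}\}\neq 0$.
   Context: Construction. Let $G_l=(V_l,E_l)$, $l=1,\dots,L$, be complete graphs with $|V_l|\ge 2$. In each $V_l$ one vertex $v_l^0$ is painted black, the others white. Set $\mathcal{G}_1=G_1$. For $l=2,\dots,L$: choose an integer $z_l$ with $0<z_l\le |V_l|-1$, choose $z_l$ white vertices of $V_l$ and identify each with a vertex (black or white; distinct with distinct) of $\mathcal{V}_{l-1}$; $\mathcal{V}_l=\mathcal{V}_{l-1}\cup V_l$ with these identifications and $\mathcal{E}_l=\mathcal{E}_{l-1}\cup E_l$. A white vertex identified with a black one becomes black; two identified white vertices stay white; $v_l^0$ is never identified with an earlier vertex. $\mathcal{V}_l^W$ denotes the white vertices of $\mathcal{G}_l$. Directed edges: $\vec{\mathcal{E}}_L=\bigcup_l\{(v,v_l^0):v\in V_l\setminus\{v_l^0\}\}$; directed paths (including the trivial path $(v)$), reachable set $R(v)$, number $N(v\to u)$ of directed paths from $v$ to $u$, and $|(v\to u)_j|$ the number of vertices on the $j$-th path. Condition (A1): for every $l\in\{2,\dots,L\}$ with $z_l\neq|V_l|-1$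 there exists $v\in\mathcal{V}_{l-1}^W$ with $N(v\to v_l^0)$ odd. Fermions $c_{v,\sigma}$ with canonical anticommutation relations; for white $v$, $a_{v,\sigma}=\sum_{u\in R(v)}\big(\sum_{j=1}^{N(v\to u)}(-1)^{|(v\to u)_j|-1}\big)c_{u,\sigma}$. *)

theory Defs
  imports Main
begin

text \<open>The graph construction is modelled with all vertices living in one type 'a:
  V l is the vertex set of G_l (after identifications), b l is its black vertex v_l^0.
  Identification of a vertex of V_l with a vertex of the earlier graph is modelled by
  the two sets sharing that element.\<close>

definition cVV :: "nat \<Rightarrow> (nat \<Rightarrow> 'a set) \<Rightarrow> 'a set" where
  "cVV l V = (\<Union>k\<in>{1..l}. V k)"

definition cWhite :: "nat \<Rightarrow> (nat \<Rightarrow> 'a set) \<Rightarrow> (nat \<Rightarrow> 'a) \<Rightarrow> 'a set" where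
  "cWhite l V b = cVV l V - b ` {1..l}"

definition zsize :: "nat \<Rightarrow> (nat \<Rightarrow> 'a set) \<Rightarrow> nat" where
  "zsize l V = card (V l \<inter> cVV (l - 1) V)"

definition valid_construction :: "nat \<Rightarrow> (nat \<Rightarrow> 'a set) \<Rightarrow> (nat \<Rightarrow> 'a) \<Rightarrow> bool" where
  "valid_construction L V b \<longleftrightarrow> 1 \<le> L \<and>
     (\<forall>l\<in>{1..L}. finite (V l) \<and> 2 \<le> card (V l) \<and> b l \<in> V l) \<and>
     (\<forall>l\<in>{2..L}. b l \<notin> cVV (l - 1) V \<and> 0 < zsize l V)"

definition dedge :: "nat \<Rightarrow> (nat \<Rightarrow> 'a set) \<Rightarrow> (nat \<Rightarrow> 'a) \<Rightarrow> 'a \<Rightarrow> 'a \<Rightarrow> bool" where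
  "dedge L V b x y \<longleftrightarrow> (\<exists>l\<in>{1..L}. y = b l \<and> x \<in> V l \<and> x \<noteq> b l)"

definition dpaths :: "nat \<Rightarrow> (nat \<Rightarrow> 'a set) \<Rightarrow> (nat \<Rightarrow> 'a) \<Rightarrow> 'a \<Rightarrow> 'a \<Rightarrow> 'a list set" where
  "dpaths L V b v u = {xs. xs \<noteq> [] \<and> hd xs = v \<and> last xs = u \<and>
     (\<forall>i. Suc i < length xs \<longrightarrow> dedge L V b (xs ! i) (xs ! Suc i))}"

definition reach :: "nat \<Rightarrow> (nat \<Rightarrow> 'a set) \<Rightarrow> (nat \<Rightarrow> 'a) \<Rightarrow> 'a \<Rightarrow> 'a set" where
  "reach L V b v = {u. dpaths L V b v u \<noteq> {}}"

definition npaths :: "nat \<Rightarrow> (nat \<Rightarrow> 'a set) \<Rightarrow> (nat \<Rightarrow> 'a) \<Rightarrow> 'a \<Rightarrow> 'a \<Rightarrow> nat" where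
  "npaths L V b v u = card (dpaths L V b v u)"

definition pcoef :: "nat \<Rightarrow> (nat \<Rightarrow> 'a set) \<Rightarrow> (nat \<Rightarrow> 'a) \<Rightarrow> 'a \<Rightarrow> 'a \<Rightarrow> int" where
  "pcoef L V b v u = (\<Sum>xs\<in>dpaths L V b v u. (-1) ^ (length xs - 1))"

text \<open>Coefficient of c_{u,sigma} in a_{v,sigma} = sum_{w in R(v)} pcoef v w c_{w,sigma}.
  By the CAR, the anticommutator {c^dagger_{u,sigma}, a_{v,sigma}} equals this scalar
  times the identity, so it is nonzero iff this coefficient is nonzero.\<close>
definition acomm :: "nat \<Rightarrow> (nat \<Rightarrow> 'a set) \<Rightarrow> (nat \<Rightarrow> 'a) \<Rightarrow> 'a \<Rightarrow> 'a \<Rightarrow> int" where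
  "acomm L V b u v = (if u \<in> reach L V b v then pcoef L V b v u else 0)"

definition condA1 :: "nat \<Rightarrow> (nat \<Rightarrow> 'a set) \<Rightarrow> (nat \<Rightarrow> 'a) \<Rightarrow> bool" where
  "condA1 L V b \<longleftrightarrow> (\<forall>l\<in>{2..L}. zsize l V \<noteq> card (V l) - 1 \<longrightarrow>
     (\<exists>v\<in>cWhite (l - 1) V b. odd (npaths L V b v (b l))))"

definition directly_connected :: "nat \<Rightarrow> (nat \<Rightarrow> 'a set) \<Rightarrow> (nat \<Rightarrow> 'a) \<Rightarrow> 'a \<Rightarrow> 'a \<Rightarrow> bool" where
  "directly_connected L V b v w \<longleftrightarrow>
     (\<exists>u\<in>cVV L V. acomm L V b u v \<noteq> 0 \<and> acomm L V b u w \<noteq> 0)"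

end

theory Submission
  imports Defs
begin

text \<open>Every directed edge ends in a black vertex v_k^0, and an edge leaving v_k^0 leads to some
  v_{k'}^0 with k < k', because v_{k'}^0 is not identified with any earlier vertex. Hence a white
  vertex x that is new in G_l (not identified with an earlier vertex) has exactly one path to
  v_l^0, namely the edge (x, v_l^0): so the coefficient of c_{v_l^0} in a_x is -1, and all new
  white vertices of G_l are directly connected through v_l^0. If G_l has a new white vertex,
  fewer than |V_l| - 1 of its vertices are identified, and (A1) provides an earlier white vertex
  with an odd, hence nonzero, number of paths to v_l^0, which links the new vertices to the
  earlier ones.\<close>

lemma cVV_mono: "k \<le> l \<Longrightarrow> cVV k V \<subseteq> cVV l V"
  unfolding cVV_def by (rule UN_mono) auto

lemma stage_subset_cVV: "1 \<le> k \<Longrightarrow> k \<le> l \<Longrightarrow> V k \<subseteq> cVV l V"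
  unfolding cVV_def by (intro UN_upper) auto

lemma cVV_Suc: "cVV (Suc l) V = cVV l V \<union> V (Suc l)"
  unfolding cVV_def by (auto simp: atLeastAtMostSuc_conv)

lemma cWhite_0 [simp]: "cWhite 0 V b = {}"
  unfolding cWhite_def cVV_def by simp

lemma acomm_ne_zero_if_odd_npaths:
  assumes "odd (npaths L V b v u)"
  shows "acomm L V b u v \<noteq> 0"
proof -
  have "card (dpaths L V b v u) \<noteq> 0"
    using assms unfolding npaths_def by (intro notI) simp
  then have fin: "finite (dpaths L V b v u)" and ne: "dpaths L V b v u \<noteq> {}"
    using card.infinite by fastforce+
  have "even (pcoef L V b v u) \<longleftrightarrow>
      even (card {xs \<in> dpaths L V b v u. odd ((-1::int) ^ (length xs - 1))})"
    unfolding pcoef_def by (rule even_sum_iff[OF fin])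
  also have "\<dots> \<longleftrightarrow> even (npaths L V b v u)"
    by (simp add: npaths_def)
  finally have "pcoef L V b v u \<noteq> 0"
    using assms by auto
  then show ?thesis
    using ne unfolding acomm_def reach_def by simp
qed

lemma rtranclp_imp_chain:
  assumes "(\<lambda>x y. x \<in> W \<and> y \<in> W \<and> P x y)\<^sup>*\<^sup>* x y" and "x \<in> W"
  shows "\<exists>ps. ps \<noteq> [] \<and> hd ps = x \<and> last ps = y \<and> set ps \<subseteq> W \<and> successively P ps"
  using assms
proof (induction rule: converse_rtranclp_induct)
  case base
  then show ?case by (intro exI[of _ "[y]"]) simp
next
  case (step x z)
  then obtain ps where "ps \<noteq> []" "hd ps = z" "last ps = y" "set ps \<subseteq> W" "successively P ps"
    by blast
  with step.hyps show ?case
    by (intro exI[of _ "x # ps"]) (auto simp: successively_Cons)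
qed

definition fresh_white :: "nat \<Rightarrow> (nat \<Rightarrow> 'a set) \<Rightarrow> (nat \<Rightarrow> 'a) \<Rightarrow> 'a set" where
  "fresh_white l V b = V l - cVV (l - 1) V - {b l}"

locale graph_construction =
  fixes L :: nat and V :: "nat \<Rightarrow> 'a set" and b :: "nat \<Rightarrow> 'a"
  assumes valid: "valid_construction L V b"
begin

lemma finite_stage: "l \<in> {1..L} \<Longrightarrow> finite (V l)"
  using valid unfolding valid_construction_def by blast

lemma card_stage: "l \<in> {1..L} \<Longrightarrow> 2 \<le> card (V l)"
  using valid unfolding valid_construction_def by blast

lemma black_in_stage: "l \<in> {1..L} \<Longrightarrow> b l \<in> V l"
  using valid unfolding valid_construction_def by blast

lemma black_in_cVV: "l \<in> {1..L} \<Longrightarrow> b l \<in> cVV L V"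
  using black_in_stage stage_subset_cVV by fastforce

lemma black_not_in_earlier:
  assumes "k < l" and "l \<le> L"
  shows "b l \<notin> cVV k V"
proof (cases "l = 1")
  case True
  then show ?thesis using assms unfolding cVV_def by simp
next
  case False
  then have "b l \<notin> cVV (l - 1) V"
    using assms valid unfolding valid_construction_def by simp
  moreover have "cVV k V \<subseteq> cVV (l - 1) V"
    using assms by (intro cVV_mono) simp
  ultimately show ?thesis by blast
qed

lemma black_inj_on: "inj_on b {1..L}"
proof -
  have "b k \<noteq> b l" if "k \<in> {1..L}" "k < l" "l \<le> L" for k l
    using black_not_in_earlier[of k l] black_in_stage[of k] stage_subset_cVV[of k k V] that by auto
  then show ?thesis
    unfolding inj_on_def by (metis atLeastAtMost_iff linorder_neqE_nat)
qed

lemma edge_from_black: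
  assumes "k \<in> {1..L}" and "dedge L V b (b k) y"
  shows "\<exists>k'. y = b k' \<and> k < k' \<and> k' \<le> L"
proof -
  obtain k' where k': "k' \<in> {1..L}" "y = b k'" "b k \<in> V k'" "b k \<noteq> b k'"
    using assms(2) unfolding dedge_def by blast
  have "k < k'"
  proof (rule ccontr)
    assume "\<not> k < k'"
    then have "k' < k" using k'(4) by (cases "k = k'") auto
    then show False
      using black_not_in_earlier[of k' k] stage_subset_cVV[of k' k' V] k' assms(1) by auto
  qed
  then show ?thesis using k' by auto
qed

lemma path_from_black:
  assumes "successively (dedge L V b) xs" and "xs \<noteq> []" and "hd xs = b m" and "m \<in> {1..L}"
  shows "\<exists>k. last xs = b k \<and> m + (length xs - 1) \<le> k \<and> k \<le> L"
  using assms
proof (induction xs arbitrary: m)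
  case Nil
  then show ?case by simp
next
  case (Cons x ys)
  show ?case
  proof (cases "ys = []")
    case True
    then show ?thesis using Cons.prems by auto
  next
    case False
    then obtain m' where m': "hd ys = b m'" "m < m'" "m' \<le> L"
      using edge_from_black[of m "hd ys"] Cons.prems by (auto simp: successively_Cons)
    then obtain k where "last ys = b k" "m' + (length ys - 1) \<le> k" "k \<le> L"
      using Cons.IH[of m'] Cons.prems False by (auto simp: successively_Cons)
    then show ?thesis using m' False by (intro exI[of _ k]) auto
  qed
qed

lemma dpaths_from_fresh:
  assumes l: "l \<in> {1..L}" and x: "x \<in> fresh_white l V b"
  shows "dpaths L V b x (b l) = {[x, b l]}"
proof
  show "{[x, b l]} \<subseteq> dpaths L V b x (b l)"
    using l x unfolding dpaths_def dedge_def fresh_white_def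
    by (auto simp: nth_Cons split: nat.splits)
next
  show "dpaths L V b x (b l) \<subseteq> {[x, b l]}"
  proof
    fix xs assume "xs \<in> dpaths L V b x (b l)"
    then obtain ys where xs: "xs = x # ys" and last: "last (x # ys) = b l"
      and chain: "successively (dedge L V b) (x # ys)"
      unfolding dpaths_def successively_conv_nth[symmetric] by (cases xs) auto
    have "ys \<noteq> []" using last x unfolding fresh_white_def by auto
    then obtain m where m: "m \<in> {1..L}" "hd ys = b m" "x \<in> V m"
      using chain unfolding dedge_def by (auto simp: successively_Cons)
    have "l \<le> m"
      using x m stage_subset_cVV[of m "l - 1" V] unfolding fresh_white_def by force
    obtain k where k: "last ys = b k" "m + (length ys - 1) \<le> k" "k \<le> L"
      using path_from_black[of ys m] chain \<open>ys \<noteq> []\<close> m by (auto simp: successively_Cons)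
    have "k = l"
      using inj_onD[OF black_inj_on] k last \<open>ys \<noteq> []\<close> l m \<open>l \<le> m\<close> by auto
    then have "length ys = 1" "m = l"
      using k \<open>k = l\<close> \<open>ys \<noteq> []\<close> \<open>l \<le> m\<close> length_greater_0_conv[of ys] by linarith+
    then have "ys = [b l]"
      using m(2) by (cases ys) auto
    then show "xs \<in> {[x, b l]}" using xs by simp
  qed
qed

lemma acomm_fresh: "l \<in> {1..L} \<Longrightarrow> x \<in> fresh_white l V b \<Longrightarrow> acomm L V b (b l) x \<noteq> 0"
  by (rule acomm_ne_zero_if_odd_npaths) (simp add: npaths_def dpaths_from_fresh)

lemma directly_connected_via_black:
  assumes "l \<in> {1..L}" and "x \<in> fresh_white l V b" and "acomm L V b (b l) y \<noteq> 0"
  shows "directly_connected L V b x y"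
  unfolding directly_connected_def using assms acomm_fresh black_in_cVV by blast

lemma zsize_ne_if_fresh:
  assumes l: "l \<in> {1..L}" and x: "x \<in> fresh_white l V b"
  shows "zsize l V \<noteq> card (V l) - 1"
proof -
  have "V l \<inter> cVV (l - 1) V \<subseteq> V l - {b l, x}"
    using x black_not_in_earlier[of "l - 1" l] l unfolding fresh_white_def by auto
  then have "zsize l V \<le> card (V l - {b l, x})"
    unfolding zsize_def using finite_stage[OF l] by (intro card_mono) auto
  also have "\<dots> = card (V l) - 2"
    using x black_in_stage[OF l] finite_stage[OF l] unfolding fresh_white_def
    by (auto simp: card_Diff_subset)
  finally show ?thesis using card_stage[OF l] by linarith
qed

lemma cWhite_mono:
  assumes "k \<le> l" and "l \<le> L"
  shows "cWhite k V b \<subseteq> cWhite l V b"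
proof
  fix x assume x: "x \<in> cWhite k V b"
  have "x \<noteq> b j" if "j \<in> {1..l}" for j
    using x that black_not_in_earlier[of k j] assms unfolding cWhite_def by (cases "j \<le> k") auto
  then show "x \<in> cWhite l V b"
    using x cVV_mono[OF assms(1), of V] unfolding cWhite_def by blast
qed

lemma cWhite_Suc:
  assumes "Suc l \<le> L"
  shows "cWhite (Suc l) V b = cWhite l V b \<union> fresh_white (Suc l) V b"
proof -
  have "\<And>j. j \<in> {1..l} \<Longrightarrow> b j \<in> cVV l V"
    using black_in_stage stage_subset_cVV assms by fastforce
  then show ?thesis
    using cWhite_mono[of l "Suc l"] assms
    unfolding cWhite_def fresh_white_def cVV_Suc by (auto simp: atLeastAtMostSuc_conv)
qed

abbreviation white_link :: "'a \<Rightarrow> 'a \<Rightarrow> bool" where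
  "white_link x y \<equiv> x \<in> cWhite L V b \<and> y \<in> cWhite L V b \<and> directly_connected L V b x y"

lemma white_link_fresh_old:
  assumes A1: "condA1 L V b" and l: "1 \<le> l" "Suc l \<le> L"
    and x: "x \<in> fresh_white (Suc l) V b"
  obtains v where "v \<in> cWhite l V b" and "white_link x v"
proof -
  have "Suc l \<in> {2..L}" using l by simp
  then obtain v where v: "v \<in> cWhite l V b" "odd (npaths L V b v (b (Suc l)))"
    using A1 zsize_ne_if_fresh[of "Suc l" x] x unfolding condA1_def by auto
  moreover have "directly_connected L V b x v"
    using directly_connected_via_black[of "Suc l" x v] acomm_ne_zero_if_odd_npaths[OF v(2)] x l
    by simp
  moreover have "x \<in> cWhite L V b" "v \<in> cWhite L V b"
    using cWhite_Suc[of l] cWhite_mono[of "Suc l" L] cWhite_mono[of l L] x v l by auto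
  ultimately show thesis using that by blast
qed

lemma whites_linked_to_base:
  assumes A1: "condA1 L V b" and w0: "w0 \<in> cWhite 1 V b"
    and l: "1 \<le> l" "l \<le> L" and x: "x \<in> cWhite l V b"
  shows "white_link\<^sup>*\<^sup>* x w0"
  using l x
proof (induction l arbitrary: x rule: nat_induct_at_least)
  case base
  then have "x \<in> fresh_white 1 V b" "w0 \<in> fresh_white 1 V b"
    using cWhite_Suc[of 0] w0 by auto
  then have "directly_connected L V b x w0"
    using directly_connected_via_black[of 1] acomm_fresh[of 1] base by simp
  moreover have "x \<in> cWhite L V b" "w0 \<in> cWhite L V b"
    using cWhite_mono[of 1 L] base w0 by auto
  ultimately show ?case by auto
next
  case (Suc l)
  show ?case
  proof (cases "x \<in> cWhite l V b")
    case True
    then show ?thesis using Suc by simp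
  next
    case False
    then have "x \<in> fresh_white (Suc l) V b" using cWhite_Suc Suc.prems by auto
    then obtain v where v: "v \<in> cWhite l V b" "white_link x v"
      using white_link_fresh_old A1 Suc by blast
    moreover have "white_link\<^sup>*\<^sup>* v w0"
      using Suc.IH Suc.prems v(1) by simp
    ultimately show ?thesis by (blast intro: converse_rtranclp_into_rtranclp)
  qed
qed

lemma whites_linked:
  assumes A1: "condA1 L V b" and "v \<in> cWhite L V b" and "v' \<in> cWhite L V b"
  shows "white_link\<^sup>*\<^sup>* v v'"
proof -
  have L: "1 \<le> L" using valid unfolding valid_construction_def by blast
  have "0 < card (V 1 - {b 1})"
    using black_in_stage[of 1] finite_stage[of 1] card_stage[of 1] L
    by (simp add: card_Diff_singleton)
  then obtain w0 where "w0 \<in> V 1 - {b 1}"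
    by (metis all_not_in_conv card.empty less_irrefl)
  then have "w0 \<in> cWhite 1 V b" unfolding cWhite_def cVV_def by simp
  then have "white_link\<^sup>*\<^sup>* v w0" "white_link\<^sup>*\<^sup>* v' w0"
    using whites_linked_to_base[OF A1, of w0 L] L assms by auto
  moreover have "symp white_link\<^sup>*\<^sup>*"
    by (rule symp_rtranclp, rule sympI) (auto simp: directly_connected_def)
  ultimately show ?thesis
    by (blast dest: sympD intro: rtranclp_trans)
qed

end

theorem mainTheorem6:
  fixes L :: nat and V :: "nat \<Rightarrow> 'a set" and b :: "nat \<Rightarrow> 'a"
  assumes "valid_construction L V b"
    and "condA1 L V b"
    and "v \<in> cWhite L V b" and "v' \<in> cWhite L V b"
  shows "\<exists>ps. ps \<noteq> [] \<and> hd ps = v \<and> last ps = v' \<and> set ps \<subseteq> cWhite L V b \<and>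
           (\<forall>j. Suc j < length ps \<longrightarrow> directly_connected L V b (ps ! j) (ps ! Suc j))"
proof -
  interpret graph_construction L V b
    using assms(1) by unfold_locales
  show ?thesis
    using rtranclp_imp_chain[OF whites_linked[OF assms(2-4)] assms(3)]
    unfolding successively_conv_nth .
qed

end
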